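(* Let $q \ge 2$ and $n$ be positive integers. (1) AME states of defect $1$ in $(\mathbb{C}^q)^{\otimes n}$ do not exist if $n > 4q^2$ when $n$ is even, and if $n > 4q^2+4q+1$ when $n$ is odd. (2) AME states of defect $2$ in $(\mathbb{C}^q)^{\otimes n}$ do not exist if $n > 6q^2+2$ when $n$ is even, and if $n > 6q^2+6q+3$ when $n$ is odd.
   Context: A pure state $|\psi\rangle \in (\mathbb{C}^q)^{\otimes n}$ is called $k$-uniform if, with $\rho = |\psi\rangle\langle\psi|$, for every subset $S \subseteq \{1,\dots,n\}$ with $|S| = k$ the reduced state of $\rho$ on the parties in $S$ (partial trace over the complementary $n-k$ parties) equals $I/q^k$, where $I$ is the identity on $(\mathbb{C}^q)^{\otimes k}$. For an integer $l \ge 0$, an AME state of defect $l$ in $(\mathbb{C}^q)^{\otimes n}$ is a $(\lfloor n/2\rfloor - l)$-uniform state in $(\mathbb{C}^q)^{\otimes n}$. *)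

theory Defs
  imports Complex_Main "HOL-Library.FuncSet"
begin

text \<open>Parties are indexed by 0..<n, local basis states by 0..<q. A vector in
(C^q)^{tensor n} is given by its coefficients on the computational basis, i.e. a
function from basis labels (elements of PiE {0..<n} (\<lambda>_. {0..<q})) to complex.\<close>

definition labels :: "nat \<Rightarrow> nat set \<Rightarrow> (nat \<Rightarrow> nat) set" where
  "labels q S = PiE S (\<lambda>_. {0..<q})"

definition merge_lbl :: "nat set \<Rightarrow> (nat \<Rightarrow> nat) \<Rightarrow> (nat \<Rightarrow> nat) \<Rightarrow> (nat \<Rightarrow> nat)" where
  "merge_lbl S a c = (\<lambda>i. if i \<in> S then a i else c i)"

text \<open>Matrix entry (a,b) of the reduced state Tr_{complement of S} |psi><psi|.\<close>
definition reduced_state ::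
  "nat \<Rightarrow> nat \<Rightarrow> ((nat \<Rightarrow> nat) \<Rightarrow> complex) \<Rightarrow> nat set \<Rightarrow> (nat \<Rightarrow> nat) \<Rightarrow> (nat \<Rightarrow> nat) \<Rightarrow> complex"
  where
  "reduced_state q n \<psi> S a b =
     (\<Sum>c \<in> labels q ({0..<n} - S). \<psi> (merge_lbl S a c) * cnj (\<psi> (merge_lbl S b c)))"

definition unit_state :: "nat \<Rightarrow> nat \<Rightarrow> ((nat \<Rightarrow> nat) \<Rightarrow> complex) \<Rightarrow> bool" where
  "unit_state q n \<psi> \<longleftrightarrow> (\<Sum>x \<in> labels q {0..<n}. (cmod (\<psi> x))\<^sup>2) = 1"

definition k_uniform :: "nat \<Rightarrow> nat \<Rightarrow> nat \<Rightarrow> ((nat \<Rightarrow> nat) \<Rightarrow> complex) \<Rightarrow> bool" where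
  "k_uniform q n k \<psi> \<longleftrightarrow> unit_state q n \<psi> \<and>
     (\<forall>S. S \<subseteq> {0..<n} \<and> card S = k \<longrightarrow>
        (\<forall>a \<in> labels q S. \<forall>b \<in> labels q S.
           reduced_state q n \<psi> S a b = (if a = b then 1 / of_nat (q ^ k) else 0)))"

definition AME_defect :: "nat \<Rightarrow> nat \<Rightarrow> nat \<Rightarrow> ((nat \<Rightarrow> nat) \<Rightarrow> complex) \<Rightarrow> bool" where
  "AME_defect q n l \<psi> \<longleftrightarrow> k_uniform q n (n div 2 - l) \<psi>"

end

theory Submission
  imports Defs
begin

text \<open>Rains' shadow method. For every set \<open>S\<close> of parties the alternating sum
  \<open>\<Sum>T\<subseteq>S. (-1)^|S - T| q^|T| tr \<rho>\<^sub>T\<^sup>2\<close> is nonnegative. Summing over all \<open>S\<close> with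
  \<open>|S| = j\<close> gives inequalities \<open>A\<^sub>j \<ge> 0\<close>, linear in the sums of \<open>tr \<rho>\<^sub>T\<^sup>2\<close> over all
  \<open>T\<close> with \<open>|T| = i\<close>. For a pure \<open>k\<close>-uniform state these are known for \<open>i \<le> k\<close> and,
  since complementary reduced states have equal purity, also for \<open>i \<ge> n - k\<close>. An AME state
  of defect 1 or 2 leaves at most two of them unknown, and a nonnegative combination of
  \<open>A\<^sub>k\<^sub>+\<^sub>2\<close>, \<open>A\<^sub>k\<^sub>+\<^sub>3\<close> (and \<open>A\<^sub>k\<^sub>+\<^sub>4\<close>) that eliminates them is negative beyond the stated bounds.\<close>

lemma finite_labels: "finite A \<Longrightarrow> finite (labels q A)"
  by (simp add: labels_def finite_PiE)

lemma card_labels: "finite A \<Longrightarrow> card (labels q A) = q ^ card A"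
  by (simp add: labels_def card_PiE)

lemma sum_labels_Un:
  assumes "A \<inter> B = {}"
  shows "(\<Sum>c\<in>labels q (A \<union> B). f c) = (\<Sum>d\<in>labels q A. \<Sum>e\<in>labels q B. f (merge_lbl A d e))"
proof -
  have "bij_betw (\<lambda>(d, e). merge_lbl A d e) (labels q A \<times> labels q B) (labels q (A \<union> B))"
  proof (rule bij_betwI[where g = "\<lambda>c. (restrict c A, restrict c B)"])
    show "(\<lambda>(d, e). merge_lbl A d e) \<in> labels q A \<times> labels q B \<rightarrow> labels q (A \<union> B)"
      using assms by (auto simp: labels_def merge_lbl_def PiE_def Pi_def extensional_def)
    show "(\<lambda>c. (restrict c A, restrict c B)) \<in> labels q (A \<union> B) \<rightarrow> labels q A \<times> labels q B"
      by (auto simp: labels_def)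
    show "(\<lambda>c. (restrict c A, restrict c B)) ((\<lambda>(d, e). merge_lbl A d e) x) = x"
      if "x \<in> labels q A \<times> labels q B" for x
      using that assms
      by (cases x) (auto simp: labels_def merge_lbl_def PiE_def extensional_def fun_eq_iff)
    show "(\<lambda>(d, e). merge_lbl A d e) ((\<lambda>c. (restrict c A, restrict c B)) y) = y"
      if "y \<in> labels q (A \<union> B)" for y
      using that by (auto simp: labels_def merge_lbl_def PiE_def extensional_def fun_eq_iff)
  qed
  then show ?thesis
    by (simp add: sum.reindex_bij_betw[symmetric] sum.cartesian_product prod.case_distrib)
qed

lemma sum_labels_insert:
  assumes "s \<notin> A"
  shows "(\<Sum>c\<in>labels q (insert s A). f c) = (\<Sum>\<alpha><q. \<Sum>d\<in>labels q A. f (d(s := \<alpha>)))"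
proof -
  have "bij_betw (\<lambda>(\<alpha>, d). d(s := \<alpha>)) ({..<q} \<times> labels q A) (labels q (insert s A))"
  proof (rule bij_betwI[where g = "\<lambda>c. (c s, c(s := undefined))"])
    show "(\<lambda>(\<alpha>, d). d(s := \<alpha>)) \<in> {..<q} \<times> labels q A \<rightarrow> labels q (insert s A)"
      using assms by (auto simp: labels_def PiE_def Pi_def extensional_def)
    show "(\<lambda>c. (c s, c(s := undefined))) \<in> labels q (insert s A) \<rightarrow> {..<q} \<times> labels q A"
      using assms by (auto simp: labels_def PiE_def Pi_def extensional_def)
    show "(\<lambda>c. (c s, c(s := undefined))) ((\<lambda>(\<alpha>, d). d(s := \<alpha>)) x) = x"
      if "x \<in> {..<q} \<times> labels q A" for x
      using that assms by (cases x) (auto simp: labels_def PiE_def extensional_def fun_eq_iff)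
  qed auto
  then show ?thesis
    by (simp add: sum.reindex_bij_betw[symmetric] sum.cartesian_product prod.case_distrib)
qed

lemma merge_lbl_insert_upd: "merge_lbl (insert s T) (a(s := \<alpha>)) d = (merge_lbl T a d)(s := \<alpha>)"
  by (auto simp: merge_lbl_def fun_eq_iff)

lemma merge_lbl_upd_notin: "s \<notin> T \<Longrightarrow> merge_lbl T a (d(s := \<alpha>)) = (merge_lbl T a d)(s := \<alpha>)"
  by (auto simp: merge_lbl_def fun_eq_iff)

lemma merge_lbl_nested:
  "T \<subseteq> S \<Longrightarrow> merge_lbl T a (merge_lbl (S - T) d e) = merge_lbl S (merge_lbl T a d) e"
  by (auto simp: merge_lbl_def fun_eq_iff)

lemma sum_rotate3:
  "(\<Sum>x\<in>A. \<Sum>y\<in>B. \<Sum>z\<in>C. g x y z) = (\<Sum>y\<in>B. \<Sum>z\<in>C. \<Sum>x\<in>A. g x y z)"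
proof -
  have "(\<Sum>x\<in>A. \<Sum>y\<in>B. \<Sum>z\<in>C. g x y z) = (\<Sum>y\<in>B. \<Sum>x\<in>A. \<Sum>z\<in>C. g x y z)"
    by (rule sum.swap)
  also have "\<dots> = (\<Sum>y\<in>B. \<Sum>z\<in>C. \<Sum>x\<in>A. g x y z)"
    by (intro sum.cong refl sum.swap)
  finally show ?thesis .
qed

lemma sum_reverse4:
  "(\<Sum>a\<in>A. \<Sum>b\<in>B. \<Sum>c\<in>C. \<Sum>d\<in>D. g a b c d) = (\<Sum>d\<in>D. \<Sum>c\<in>C. \<Sum>b\<in>B. \<Sum>a\<in>A. g a b c d)"
proof -
  have "(\<Sum>a\<in>A. \<Sum>b\<in>B. \<Sum>c\<in>C. \<Sum>d\<in>D. g a b c d) = (\<Sum>a\<in>A. \<Sum>c\<in>C. \<Sum>d\<in>D. \<Sum>b\<in>B. g a b c d)"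
    by (intro sum.cong refl sum_rotate3)
  also have "\<dots> = (\<Sum>c\<in>C. \<Sum>d\<in>D. \<Sum>a\<in>A. \<Sum>b\<in>B. g a b c d)"
    by (rule sum_rotate3)
  also have "\<dots> = (\<Sum>c\<in>C. \<Sum>d\<in>D. \<Sum>b\<in>B. \<Sum>a\<in>A. g a b c d)"
    by (intro sum.cong refl sum.swap)
  also have "\<dots> = (\<Sum>d\<in>D. \<Sum>c\<in>C. \<Sum>b\<in>B. \<Sum>a\<in>A. g a b c d)"
    by (rule sum.swap)
  finally show ?thesis .
qed

lemma power2_sum_Lagrange:
  fixes x :: "'i \<Rightarrow> real"
  shows "(\<Sum>i\<in>I. x i)\<^sup>2 = real (card I) * (\<Sum>i\<in>I. (x i)\<^sup>2) - (\<Sum>i\<in>I. \<Sum>j\<in>I. (x i - x j)\<^sup>2) / 2"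
proof -
  have "(\<Sum>i\<in>I. \<Sum>j\<in>I. (x i - x j)\<^sup>2) = (\<Sum>i\<in>I. \<Sum>j\<in>I. (x i)\<^sup>2 + (x j)\<^sup>2 - 2 * x i * x j)"
    by (simp add: power2_diff)
  also have "\<dots> = 2 * real (card I) * (\<Sum>i\<in>I. (x i)\<^sup>2) - 2 * (\<Sum>i\<in>I. x i)\<^sup>2"
    by (simp add: sum.distrib sum_subtractf sum_distrib_left[symmetric] power2_eq_square
        sum_product mult.assoc sum.swap[of "\<lambda>i j. x j * x j"])
  finally show ?thesis by linarith
qed

lemma cmod_sum_power2_Lagrange:
  fixes u :: "'i \<Rightarrow> complex"
  shows "(cmod (\<Sum>i\<in>I. u i))\<^sup>2 = real (card I) * (\<Sum>i\<in>I. (cmod (u i))\<^sup>2)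
           - (\<Sum>i\<in>I. \<Sum>j\<in>I. (cmod (u i - u j))\<^sup>2) / 2"
  using power2_sum_Lagrange[of "\<lambda>i. Re (u i)" I] power2_sum_Lagrange[of "\<lambda>i. Im (u i)" I]
  by (simp add: cmod_power2 Re_sum Im_sum sum.distrib algebra_simps sum_distrib_left
      add_divide_distrib)

section \<open>Sector weights of operators\<close>

definition partial_trace ::
  "nat \<Rightarrow> nat set \<Rightarrow> nat set \<Rightarrow> ((nat \<Rightarrow> nat) \<Rightarrow> (nat \<Rightarrow> nat) \<Rightarrow> complex)
     \<Rightarrow> (nat \<Rightarrow> nat) \<Rightarrow> (nat \<Rightarrow> nat) \<Rightarrow> complex" where
  "partial_trace q S T X a b = (\<Sum>d\<in>labels q (S - T). X (merge_lbl T a d) (merge_lbl T b d))"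

definition hs_norm2 :: "nat \<Rightarrow> nat set \<Rightarrow> ((nat \<Rightarrow> nat) \<Rightarrow> (nat \<Rightarrow> nat) \<Rightarrow> complex) \<Rightarrow> real" where
  "hs_norm2 q T Y = (\<Sum>a\<in>labels q T. \<Sum>b\<in>labels q T. (cmod (Y a b))\<^sup>2)"

text \<open>For an operator \<open>X\<close> on the parties \<open>S\<close>, \<open>sector_weight q S X\<close> is \<open>q ^ card S\<close> times
  the squared norm of the part of \<open>X\<close> acting nontrivially on every party of \<open>S\<close>
  (Rains' \<open>A\<^sub>S\<close>), written by inclusion-exclusion over partial traces.\<close>
definition sector_weight :: "nat \<Rightarrow> nat set \<Rightarrow> ((nat \<Rightarrow> nat) \<Rightarrow> (nat \<Rightarrow> nat) \<Rightarrow> complex) \<Rightarrow> real" where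
  "sector_weight q S X =
     (\<Sum>T\<in>Pow S. (-1) ^ card (S - T) * real q ^ card T * hs_norm2 q T (partial_trace q S T X))"

lemma hs_norm2_nonneg: "0 \<le> hs_norm2 q T Y"
  unfolding hs_norm2_def by (intro sum_nonneg) auto

lemma hs_norm2_sum_Lagrange:
  "hs_norm2 q T (\<lambda>a b. \<Sum>\<alpha>\<in>I. Y \<alpha> a b) = real (card I) * (\<Sum>\<alpha>\<in>I. hs_norm2 q T (Y \<alpha>))
     - (\<Sum>\<alpha>\<in>I. \<Sum>\<beta>\<in>I. hs_norm2 q T (\<lambda>a b. Y \<alpha> a b - Y \<beta> a b)) / 2"
  unfolding hs_norm2_def cmod_sum_power2_Lagrange sum_subtractf sum_divide_distrib[symmetric]
    sum_distrib_left[symmetric]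
  by (simp only: sum_rotate3[where B = "labels q T" and C = "labels q T", symmetric])

lemma partial_trace_sum:
  "partial_trace q S T (\<lambda>a b. \<Sum>\<alpha>\<in>I. Y \<alpha> a b) = (\<lambda>a b. \<Sum>\<alpha>\<in>I. partial_trace q S T (Y \<alpha>) a b)"
  unfolding partial_trace_def by (intro ext sum.swap)

lemma partial_trace_diff:
  "partial_trace q S T (\<lambda>a b. Y a b - Z a b) = (\<lambda>a b. partial_trace q S T Y a b - partial_trace q S T Z a b)"
  unfolding partial_trace_def by (simp add: sum_subtractf)

lemma sector_weight_sum_Lagrange:
  "sector_weight q S (\<lambda>a b. \<Sum>\<alpha>\<in>I. Y \<alpha> a b) = real (card I) * (\<Sum>\<alpha>\<in>I. sector_weight q S (Y \<alpha>))
     - (\<Sum>\<alpha>\<in>I. \<Sum>\<beta>\<in>I. sector_weight q S (\<lambda>a b. Y \<alpha> a b - Y \<beta> a b)) / 2"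
  unfolding sector_weight_def partial_trace_sum hs_norm2_sum_Lagrange partial_trace_diff[symmetric]
    right_diff_distrib sum_subtractf sum_distrib_left sum_divide_distrib times_divide_eq_right
    mult.left_commute[of _ "real (card I)"]
  by (simp only: sum.swap[where A = "Pow S"] sum_rotate3[where A = "Pow S"])

lemma hs_norm2_insert:
  "s \<notin> T \<Longrightarrow> hs_norm2 q (insert s T) Y = (\<Sum>\<alpha><q. \<Sum>\<beta><q. hs_norm2 q T (\<lambda>a b. Y (a(s := \<alpha>)) (b(s := \<beta>))))"
  unfolding hs_norm2_def
  by (simp add: sum_labels_insert sum.swap[where A = "labels q T" and B = "{..<q}"])

lemma partial_trace_insert_kept:
  assumes "s \<notin> S" "T \<subseteq> S"
  shows "partial_trace q (insert s S) (insert s T) X (a(s := \<alpha>)) (b(s := \<beta>))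
       = partial_trace q S T (\<lambda>a b. X (a(s := \<alpha>)) (b(s := \<beta>))) a b"
proof -
  have "insert s S - insert s T = S - T" using assms by auto
  then show ?thesis unfolding partial_trace_def merge_lbl_insert_upd by simp
qed

lemma partial_trace_insert_traced:
  assumes "s \<notin> S" "T \<subseteq> S"
  shows "partial_trace q (insert s S) T X
       = partial_trace q S T (\<lambda>a b. \<Sum>\<alpha><q. X (a(s := \<alpha>)) (b(s := \<alpha>)))"
proof -
  have "insert s S - T = insert s (S - T)" "s \<notin> S - T" "s \<notin> T" using assms by auto
  then show ?thesis
    unfolding partial_trace_def
    by (simp add: sum_labels_insert merge_lbl_upd_notin sum.swap[where A = "{..<q}"])
qed

text \<open>Adding a party \<open>s\<close> to \<open>S\<close>: the subsets containing \<open>s\<close> contribute the blocks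
  \<open>X\<^sub>\<alpha>\<^sub>\<beta>\<close> of \<open>X\<close>, the others the partial trace over \<open>s\<close>.\<close>
lemma sector_weight_insert:
  assumes "finite S" "s \<notin> S"
  shows "sector_weight q (insert s S) X
       = real q * (\<Sum>\<alpha><q. \<Sum>\<beta><q. sector_weight q S (\<lambda>a b. X (a(s := \<alpha>)) (b(s := \<beta>))))
         - sector_weight q S (\<lambda>a b. \<Sum>\<alpha><q. X (a(s := \<alpha>)) (b(s := \<alpha>)))"
proof -
  let ?X = "\<lambda>\<alpha> \<beta> a b. X (a(s := \<alpha>)) (b(s := \<beta>))"
  let ?c = "\<lambda>T. (-1::real) ^ card (S - T) * real q ^ card T"
  let ?f = "\<lambda>T. (-1::real) ^ card (insert s S - T) * real q ^ card T
              * hs_norm2 q T (partial_trace q (insert s S) T X)"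
  have "sector_weight q (insert s S) X = sum ?f (Pow S) + sum ?f (insert s ` Pow S)"
    unfolding sector_weight_def Pow_insert
    by (rule sum.union_disjoint) (use assms in auto)
  also have "sum ?f (insert s ` Pow S) = (\<Sum>T\<in>Pow S. ?f (insert s T))"
    by (rule sum.reindex_cong[where l = "insert s"]) (use assms in \<open>auto simp: inj_on_def\<close>)
  also have "\<dots> = (\<Sum>T\<in>Pow S. real q * (\<Sum>\<alpha><q. \<Sum>\<beta><q. ?c T * hs_norm2 q T (partial_trace q S T (?X \<alpha> \<beta>))))"
  proof (rule sum.cong[OF refl])
    fix T assume "T \<in> Pow S"
    then have "T \<subseteq> S" "finite T" "s \<notin> T" "insert s S - insert s T = S - T"
      using assms finite_subset by auto
    then show "?f (insert s T) = real q * (\<Sum>\<alpha><q. \<Sum>\<beta><q. ?c T * hs_norm2 q T (partial_trace q S T (?X \<alpha> \<beta>)))"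
      using assms by (simp add: hs_norm2_insert partial_trace_insert_kept sum_distrib_left mult_ac)
  qed
  also have "\<dots> = real q * (\<Sum>\<alpha><q. \<Sum>\<beta><q. sector_weight q S (?X \<alpha> \<beta>))"
    unfolding sector_weight_def sum_distrib_left by (simp only: sum_rotate3[where A = "Pow S"])
  also have "sum ?f (Pow S) = - sector_weight q S (\<lambda>a b. \<Sum>\<alpha><q. ?X \<alpha> \<alpha> a b)"
    unfolding sector_weight_def sum_negf[symmetric]
  proof (rule sum.cong[OF refl])
    fix T assume "T \<in> Pow S"
    then have "T \<subseteq> S" "insert s S - T = insert s (S - T)" "finite (S - T)" "s \<notin> S - T"
      using assms by auto
    then show "?f T = - (?c T * hs_norm2 q T (partial_trace q S T (\<lambda>a b. \<Sum>\<alpha><q. ?X \<alpha> \<alpha> a b)))"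
      using assms by (simp add: partial_trace_insert_traced)
  qed
  finally show ?thesis by linarith
qed

text \<open>By Lagrange's identity, the partial trace over \<open>s\<close> in \<open>sector_weight_insert\<close> is at most
  \<open>q\<close> times the sum of the diagonal blocks, which in turn is dominated by the sum of all blocks.\<close>
lemma sector_weight_nonneg: "finite S \<Longrightarrow> 0 \<le> sector_weight q S X"
proof (induction S arbitrary: X rule: finite_induct)
  case empty
  then show ?case by (simp add: sector_weight_def hs_norm2_nonneg)
next
  case (insert s S)
  let ?X = "\<lambda>\<alpha> \<beta> a b. X (a(s := \<alpha>)) (b(s := \<beta>))"
  have "0 \<le> (\<Sum>\<alpha><q. \<Sum>\<beta><q. sector_weight q S (\<lambda>a b. ?X \<alpha> \<alpha> a b - ?X \<beta> \<beta> a b))"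
    by (intro sum_nonneg insert.IH)
  then have "sector_weight q S (\<lambda>a b. \<Sum>\<alpha><q. ?X \<alpha> \<alpha> a b) \<le> real q * (\<Sum>\<alpha><q. sector_weight q S (?X \<alpha> \<alpha>))"
    using sector_weight_sum_Lagrange[where I = "{..<q}" and Y = "\<lambda>\<alpha>. ?X \<alpha> \<alpha>"] by simp
  also have "\<dots> \<le> real q * (\<Sum>\<alpha><q. \<Sum>\<beta><q. sector_weight q S (?X \<alpha> \<beta>))"
  proof (intro mult_left_mono sum_mono)
    fix \<alpha> assume "\<alpha> \<in> {..<q}"
    then show "sector_weight q S (?X \<alpha> \<alpha>) \<le> (\<Sum>\<beta><q. sector_weight q S (?X \<alpha> \<beta>))"
      by (intro member_le_sum insert.IH) auto
  qed simp
  finally show ?case unfolding sector_weight_insert[OF insert.hyps] by simp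
qed

section \<open>Purities of reduced states\<close>

definition purity :: "nat \<Rightarrow> nat \<Rightarrow> ((nat \<Rightarrow> nat) \<Rightarrow> complex) \<Rightarrow> nat set \<Rightarrow> real" where
  "purity q n \<psi> T = hs_norm2 q T (reduced_state q n \<psi> T)"

lemma reduced_state_partial_trace:
  assumes "T \<subseteq> S" "S \<subseteq> {0..<n}"
  shows "reduced_state q n \<psi> T a b = partial_trace q S T (reduced_state q n \<psi> S) a b"
proof -
  have "{0..<n} - T = (S - T) \<union> ({0..<n} - S)" "(S - T) \<inter> ({0..<n} - S) = {}"
    using assms by auto
  then show ?thesis
    unfolding reduced_state_def partial_trace_def
    by (simp add: sum_labels_Un merge_lbl_nested[OF assms(1)])
qed

lemma sector_sum_purity_nonneg:
  assumes "S \<subseteq> {0..<n}"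
  shows "0 \<le> (\<Sum>T\<in>Pow S. (-1) ^ card (S - T) * real q ^ card T * purity q n \<psi> T)"
proof -
  have "(\<Sum>T\<in>Pow S. (-1) ^ card (S - T) * real q ^ card T * purity q n \<psi> T)
      = sector_weight q S (reduced_state q n \<psi> S)"
    unfolding sector_weight_def purity_def hs_norm2_def
    by (intro sum.cong refl) (use assms reduced_state_partial_trace in auto)
  also have "0 \<le> \<dots>"
    using assms by (intro sector_weight_nonneg) (auto intro: finite_subset)
  finally show ?thesis .
qed

lemma of_real_purity:
  "complex_of_real (purity q n \<psi> T)
     = (\<Sum>a\<in>labels q T. \<Sum>b\<in>labels q T. \<Sum>c'\<in>labels q ({0..<n} - T). \<Sum>c\<in>labels q ({0..<n} - T).
          \<psi> (merge_lbl T a c) * cnj (\<psi> (merge_lbl T b c)) * cnj (\<psi> (merge_lbl T a c')) * \<psi> (merge_lbl T b c'))"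
  unfolding purity_def hs_norm2_def reduced_state_def of_real_sum complex_norm_square
  by (simp add: sum_product sum_distrib_left mult_ac cnj_sum)

text \<open>The Schmidt decomposition in coordinates: both purities are the same fourfold sum.\<close>
lemma purity_complement:
  assumes "T \<subseteq> {0..<n}"
  shows "purity q n \<psi> ({0..<n} - T) = purity q n \<psi> T"
proof -
  let ?U = "{0..<n}"
  have UU: "?U - (?U - T) = T" using assms by auto
  have swap: "merge_lbl (?U - T) c a = merge_lbl T a c" if "a \<in> labels q T" "c \<in> labels q (?U - T)" for a c
    using that assms by (auto simp: merge_lbl_def fun_eq_iff labels_def PiE_def extensional_def)
  have "complex_of_real (purity q n \<psi> (?U - T))
      = (\<Sum>c\<in>labels q (?U - T). \<Sum>c'\<in>labels q (?U - T). \<Sum>b\<in>labels q T. \<Sum>a\<in>labels q T.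
           \<psi> (merge_lbl T a c) * cnj (\<psi> (merge_lbl T b c)) * cnj (\<psi> (merge_lbl T a c')) * \<psi> (merge_lbl T b c'))"
    unfolding of_real_purity UU by (intro sum.cong refl) (simp add: swap mult_ac)
  also have "\<dots> = complex_of_real (purity q n \<psi> T)"
    unfolding of_real_purity by (rule sum_reverse4[symmetric])
  finally show ?thesis by simp
qed

lemma reduced_state_uniform:
  assumes ku: "k_uniform q n k \<psi>" and T: "T \<subseteq> {0..<n}" "card T \<le> k" and "k \<le> n" "q > 0"
    and a: "a \<in> labels q T" and b: "b \<in> labels q T"
  shows "reduced_state q n \<psi> T a b = (if a = b then 1 / of_nat (q ^ card T) else 0)"
proof -
  have fT: "finite T" using T finite_subset by auto
  have "k - card T \<le> card ({0..<n} - T)" using T \<open>k \<le> n\<close> by (simp add: card_Diff_subset fT)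
  then obtain R where R: "R \<subseteq> {0..<n} - T" "card R = k - card T" "finite R"
    by (rule obtain_subset_with_card_n)
  define S where "S = T \<union> R"
  have TS: "T \<subseteq> S" and SU: "S \<subseteq> {0..<n}" and SmT: "S - T = R"
    using R T by (auto simp: S_def)
  have cS: "card S = k" unfolding S_def using R T fT by (subst card_Un_disjoint) auto
  have merge_in: "merge_lbl T x d \<in> labels q S" if "x \<in> labels q T" "d \<in> labels q R" for x d
    using that R by (auto simp: labels_def merge_lbl_def PiE_def Pi_def extensional_def S_def)
  have merge_eq: "merge_lbl T a d = merge_lbl T b d \<longleftrightarrow> a = b" for d
    using a b by (auto simp: merge_lbl_def labels_def PiE_def extensional_def fun_eq_iff) metis
  have "reduced_state q n \<psi> T a b
      = (\<Sum>d\<in>labels q R. reduced_state q n \<psi> S (merge_lbl T a d) (merge_lbl T b d))"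
    unfolding reduced_state_partial_trace[OF TS SU] partial_trace_def SmT ..
  also have "\<dots> = (\<Sum>d\<in>labels q R. if a = b then 1 / of_nat (q ^ k) else 0)"
    using ku SU cS merge_in a b merge_eq unfolding k_uniform_def by (intro sum.cong refl) auto
  also have "\<dots> = (if a = b then of_nat (q ^ (k - card T)) / of_nat (q ^ k) else 0)"
    using card_labels[OF R(3), of q] R(2) by simp
  also have "\<dots> = (if a = b then 1 / of_nat (q ^ card T) else 0)"
  proof -
    have "q ^ k = q ^ (k - card T) * q ^ card T" using T by (simp flip: power_add)
    then show ?thesis using \<open>q > 0\<close> by simp
  qed
  finally show ?thesis .
qed

lemma purity_uniform:
  assumes "k_uniform q n k \<psi>" "T \<subseteq> {0..<n}" "card T \<le> k" "k \<le> n" "q > 0"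
  shows "purity q n \<psi> T = 1 / real q ^ card T"
proof -
  have fT: "finite T" using assms(2) finite_subset by auto
  have "purity q n \<psi> T = (\<Sum>a\<in>labels q T. \<Sum>b\<in>labels q T. if a = b then (1 / real q ^ card T)\<^sup>2 else 0)"
    unfolding purity_def hs_norm2_def
    by (intro sum.cong refl) (simp add: reduced_state_uniform[OF assms] norm_divide norm_power)
  also have "\<dots> = real (q ^ card T) * (1 / real q ^ card T)\<^sup>2"
    using finite_labels[OF fT, of q] card_labels[OF fT, of q] by simp
  also have "\<dots> = 1 / real q ^ card T" using \<open>q > 0\<close> by (simp add: power2_eq_square)
  finally show ?thesis .
qed

section \<open>Rains' weight enumerators\<close>

text \<open>Up to normalisation, \<open>purity_sum q n \<psi> i\<close> and \<open>weight_enumerator q n \<psi> j\<close> are the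
  coefficients \<open>A'\<^sub>i\<close> and \<open>A\<^sub>j\<close> of Rains' unitary weight enumerators.\<close>
definition purity_sum :: "nat \<Rightarrow> nat \<Rightarrow> ((nat \<Rightarrow> nat) \<Rightarrow> complex) \<Rightarrow> nat \<Rightarrow> real" where
  "purity_sum q n \<psi> i = real q ^ i * (\<Sum>T | T \<subseteq> {0..<n} \<and> card T = i. purity q n \<psi> T)"

definition weight_enumerator :: "nat \<Rightarrow> nat \<Rightarrow> ((nat \<Rightarrow> nat) \<Rightarrow> complex) \<Rightarrow> nat \<Rightarrow> real" where
  "weight_enumerator q n \<psi> j =
     (\<Sum>i\<le>j. (-1) ^ (j - i) * real ((n - i) choose (j - i)) * purity_sum q n \<psi> i)"

lemma card_supersets_with_card:
  assumes "finite U" "T \<subseteq> U"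
  shows "card {S. S \<subseteq> U \<and> card S = j \<and> T \<subseteq> S}
       = (if card T \<le> j then (card U - card T) choose (j - card T) else 0)"
proof (cases "card T \<le> j")
  case False
  then have "{S. S \<subseteq> U \<and> card S = j \<and> T \<subseteq> S} = {}"
    using card_mono[of _ T] assms by (auto intro: finite_subset)
  then have "card {S. S \<subseteq> U \<and> card S = j \<and> T \<subseteq> S} = 0" by (simp only: card.empty)
  with False show ?thesis by simp
next
  case True
  have fT: "finite T" using assms finite_subset by auto
  have "bij_betw (\<lambda>S. S - T) {S. S \<subseteq> U \<and> card S = j \<and> T \<subseteq> S} {R. R \<subseteq> U - T \<and> card R = j - card T}"
  proof (rule bij_betwI[where g = "\<lambda>R. R \<union> T"])
    show "(\<lambda>R. R \<union> T) \<in> {R. R \<subseteq> U - T \<and> card R = j - card T} \<rightarrow> {S. S \<subseteq> U \<and> card S = j \<and> T \<subseteq> S}"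
    proof
      fix R assume R: "R \<in> {R. R \<subseteq> U - T \<and> card R = j - card T}"
      then have "card (R \<union> T) = card R + card T"
        using fT \<open>finite U\<close> by (subst card_Un_disjoint) (auto intro: finite_subset)
      then show "R \<union> T \<in> {S. S \<subseteq> U \<and> card S = j \<and> T \<subseteq> S}" using R assms True by auto
    qed
  qed (use fT in \<open>auto simp: card_Diff_subset\<close>)
  then have "card {S. S \<subseteq> U \<and> card S = j \<and> T \<subseteq> S} = card {R. R \<subseteq> U - T \<and> card R = j - card T}"
    by (rule bij_betw_same_card)
  also have "\<dots> = (card U - card T) choose (j - card T)"
    using assms fT by (simp add: n_subsets card_Diff_subset)
  finally show ?thesis using True by simp
qed

lemma weight_enumerator_eq_sum_sectors:
  assumes "j \<le> n"
  shows "weight_enumerator q n \<psi> j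
       = (\<Sum>S | S \<subseteq> {0..<n} \<and> card S = j. \<Sum>T\<in>Pow S. (-1) ^ card (S - T) * real q ^ card T * purity q n \<psi> T)"
proof -
  let ?U = "{0..<n}"
  let ?h = "\<lambda>T. (-1::real) ^ (j - card T) * real q ^ card T * purity q n \<psi> T"
  let ?G = "\<lambda>i. (if i \<le> j then real ((n - i) choose (j - i)) else 0) * (-1::real) ^ (j - i)"
  have "(\<Sum>S | S \<subseteq> ?U \<and> card S = j. \<Sum>T\<in>Pow S. (-1) ^ card (S - T) * real q ^ card T * purity q n \<psi> T)
      = (\<Sum>S | S \<subseteq> ?U \<and> card S = j. \<Sum>T | T \<in> Pow ?U \<and> T \<subseteq> S. ?h T)"
  proof (rule sum.cong[OF refl])
    fix S assume S: "S \<in> {S. S \<subseteq> ?U \<and> card S = j}"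
    then have "card (S - T) = j - card T" if "T \<subseteq> S" for T
      using that by (auto simp: card_Diff_subset finite_subset)
    moreover have "{T. T \<in> Pow ?U \<and> T \<subseteq> S} = Pow S" using S by auto
    ultimately show "(\<Sum>T\<in>Pow S. (-1) ^ card (S - T) * real q ^ card T * purity q n \<psi> T)
        = (\<Sum>T | T \<in> Pow ?U \<and> T \<subseteq> S. ?h T)" by (intro sum.cong) auto
  qed
  also have "\<dots> = (\<Sum>T\<in>Pow ?U. \<Sum>S | S \<subseteq> ?U \<and> card S = j \<and> T \<subseteq> S. ?h T)"
    by (subst sum.swap_restrict) (auto intro: finite_subset[of _ "Pow ?U"])
  also have "\<dots> = (\<Sum>T\<in>Pow ?U. ?G (card T) * (real q ^ card T * purity q n \<psi> T))"
    by (intro sum.cong refl) (simp add: card_supersets_with_card)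
  also have "\<dots> = (\<Sum>i\<le>n. \<Sum>T | T \<in> Pow ?U \<and> card T = i. ?G (card T) * (real q ^ card T * purity q n \<psi> T))"
    by (rule sum.group[symmetric]) (auto intro: card_mono[of ?U, simplified])
  also have "\<dots> = (\<Sum>i\<le>n. ?G i * purity_sum q n \<psi> i)"
    unfolding purity_sum_def sum_distrib_left by (intro sum.cong refl) auto
  also have "\<dots> = (\<Sum>i\<le>j. ?G i * purity_sum q n \<psi> i)"
    by (rule sum.mono_neutral_right) (use assms in auto)
  also have "\<dots> = weight_enumerator q n \<psi> j"
    unfolding weight_enumerator_def by (intro sum.cong refl) auto
  finally show ?thesis ..
qed

lemma weight_enumerator_nonneg: "j \<le> n \<Longrightarrow> 0 \<le> weight_enumerator q n \<psi> j"
  unfolding weight_enumerator_eq_sum_sectors by (intro sum_nonneg sector_sum_purity_nonneg) auto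

lemma purity_sum_uniform:
  assumes "k_uniform q n k \<psi>" "i \<le> k" "k \<le> n" "q > 0"
  shows "purity_sum q n \<psi> i = real (n choose i)"
proof -
  have "(\<Sum>T | T \<subseteq> {0..<n} \<and> card T = i. purity q n \<psi> T)
      = (\<Sum>T | T \<subseteq> {0..<n} \<and> card T = i. 1 / real q ^ i)"
    using purity_uniform[OF assms(1) _ _ assms(3,4)] assms(2) by (intro sum.cong refl) auto
  then show ?thesis using \<open>q > 0\<close> unfolding purity_sum_def by (simp add: n_subsets)
qed

lemma purity_sum_complement:
  assumes "i + j = n" "j = i + m" "q > 0"
  shows "purity_sum q n \<psi> j = real q ^ m * purity_sum q n \<psi> i"
proof -
  let ?U = "{0..<n}"
  have card_compl: "card (?U - T) = n - card T" if "T \<subseteq> ?U" for T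
    using that by (simp add: card_Diff_subset finite_subset)
  have "bij_betw (\<lambda>T. ?U - T) {T. T \<subseteq> ?U \<and> card T = i} {T. T \<subseteq> ?U \<and> card T = j}"
  proof (rule bij_betwI[where g = "\<lambda>T. ?U - T"])
    show "(\<lambda>T. ?U - T) \<in> {T. T \<subseteq> ?U \<and> card T = i} \<rightarrow> {T. T \<subseteq> ?U \<and> card T = j}"
      using assms(1) card_compl by auto
    show "(\<lambda>T. ?U - T) \<in> {T. T \<subseteq> ?U \<and> card T = j} \<rightarrow> {T. T \<subseteq> ?U \<and> card T = i}"
      using assms(1) card_compl by auto
  qed auto
  then have "(\<Sum>T | T \<subseteq> ?U \<and> card T = j. purity q n \<psi> T)
      = (\<Sum>T | T \<subseteq> ?U \<and> card T = i. purity q n \<psi> (?U - T))"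
    by (rule sum.reindex_bij_betw[symmetric])
  also have "\<dots> = (\<Sum>T | T \<subseteq> ?U \<and> card T = i. purity q n \<psi> T)"
    by (intro sum.cong refl purity_complement) auto
  finally show ?thesis unfolding purity_sum_def assms(2) by (simp add: power_add)
qed

lemma minus_one_power_diff: "i \<le> j \<Longrightarrow> (-1::real) ^ (j - i) = (-1) ^ j * (-1) ^ i"
  by (auto simp: minus_one_power_iff)

lemma sum_alternating_binomial_prefix:
  "0 < j \<Longrightarrow> (\<Sum>i\<le>k. (-1::real) ^ i * real (j choose i)) = (-1) ^ k * real ((j - 1) choose k)"
  using gbinomial_sum_lower_neg[of "real j" k] by (simp add: binomial_gbinomial of_nat_diff mult_ac)

lemma sum_alternating_binomial_product:
  assumes "k < j" "j \<le> n"
  shows "(\<Sum>i\<le>k. (-1::real) ^ (j - i) * real ((n - i) choose (j - i)) * real (n choose i))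
       = (-1) ^ (j - k) * real (n choose j) * real ((j - 1) choose k)"
proof -
  have "(\<Sum>i\<le>k. (-1::real) ^ (j - i) * real ((n - i) choose (j - i)) * real (n choose i))
      = (\<Sum>i\<le>k. (-1) ^ j * real (n choose j) * ((-1) ^ i * real (j choose i)))"
  proof (rule sum.cong[OF refl])
    fix i assume "i \<in> {..k}"
    then have "i \<le> j" using assms by simp
    then have "real (n choose i) * real ((n - i) choose (j - i)) = real (n choose j) * real (j choose i)"
      using choose_mult[OF _ assms(2)] by (simp flip: of_nat_mult)
    then show "(-1::real) ^ (j - i) * real ((n - i) choose (j - i)) * real (n choose i)
        = (-1) ^ j * real (n choose j) * ((-1) ^ i * real (j choose i))"
      using minus_one_power_diff[OF \<open>i \<le> j\<close>] by (simp add: mult_ac)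
  qed
  also have "\<dots> = (-1) ^ j * real (n choose j) * ((-1) ^ k * real ((j - 1) choose k))"
    using assms by (simp add: sum_distrib_left[symmetric] sum_alternating_binomial_prefix)
  also have "\<dots> = (-1) ^ (j - k) * real (n choose j) * real ((j - 1) choose k)"
    using minus_one_power_diff[of k j] assms by (simp add: mult_ac)
  finally show ?thesis .
qed

lemma real_binomial_succ_ratio:
  assumes "j < n" "i = j + 1"
  shows "real (n choose i) * real i = real (n choose j) * (real n - real j)"
proof -
  have "(n choose (j + 1)) * (j + 1) = (n choose j) * (n - j)"
    using Suc_times_binomial_eq[of "n - 1" j] binomial_absorb_comp[of n j] assms(1)
    by (cases n) (simp_all add: mult_ac)
  then have "real ((n choose (j + 1)) * (j + 1)) = real ((n choose j) * (n - j))" by simp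
  then show ?thesis using assms by (simp add: of_nat_diff algebra_simps)
qed

lemma real_binomial_ratio_plus3:
  assumes "k + 2 < n"
  shows "real (n choose (k + 3)) * (real k + 3) = real (n choose (k + 2)) * (real n - real k - 2)"
proof -
  have "real (n choose (k + 3)) * real (k + 3) = real (n choose (k + 2)) * (real n - real (k + 2))"
    by (rule real_binomial_succ_ratio) (use assms in simp_all)
  then show ?thesis by (simp only: of_nat_add of_nat_numeral diff_diff_eq)
qed

lemma real_binomial_ratio_plus4:
  assumes "k + 3 < n"
  shows "real (n choose (k + 4)) * (real k + 4) = real (n choose (k + 3)) * (real n - real k - 3)"
proof -
  have "real (n choose (k + 4)) * real (k + 4) = real (n choose (k + 3)) * (real n - real (k + 3))"
    by (rule real_binomial_succ_ratio) (use assms in simp_all)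
  then show ?thesis by (simp only: of_nat_add of_nat_numeral diff_diff_eq)
qed

lemma real_choose_two: "real (m choose 2) = real m * (real m - 1) / 2"
  by (induction m) (auto simp: numeral_2_eq_2 field_simps)

lemma real_choose_three: "real (m choose 3) = real m * (real m - 1) * (real m - 2) / 6"
proof (induction m)
  case 0
  then show ?case by (simp add: numeral_3_eq_3)
next
  case (Suc m)
  have "Suc m choose 3 = (m choose 2) + (m choose 3)" by (simp add: numeral_3_eq_3 numeral_2_eq_2)
  then show ?case using Suc real_choose_two[of m] by (simp add: field_simps)
qed

lemma weight_enumerator_uniform:
  assumes ku: "k_uniform q n k \<psi>" and "q > 0" "0 < d" "k + d \<le> n"
  shows "weight_enumerator q n \<psi> (k + d)
       = (-1) ^ d * real (n choose (k + d)) * real ((k + d - 1) choose k)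
         + (\<Sum>t<d. (-1) ^ (d - 1 - t) * real ((n - (k + 1 + t)) choose (d - 1 - t)) * purity_sum q n \<psi> (k + 1 + t))"
proof -
  let ?f = "\<lambda>i. (-1::real) ^ (k + d - i) * real ((n - i) choose (k + d - i)) * purity_sum q n \<psi> i"
  have "weight_enumerator q n \<psi> (k + d) = (\<Sum>i\<le>k. ?f i) + (\<Sum>i = Suc k..k + d. ?f i)"
    unfolding weight_enumerator_def by (rule sum_up_index_split)
  also have "(\<Sum>i\<le>k. ?f i) = (\<Sum>i\<le>k. (-1) ^ (k + d - i) * real ((n - i) choose (k + d - i)) * real (n choose i))"
    using purity_sum_uniform[OF ku _ _ \<open>q > 0\<close>] assms(4) by (intro sum.cong refl) auto
  also have "\<dots> = (-1) ^ d * real (n choose (k + d)) * real ((k + d - 1) choose k)"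
    using sum_alternating_binomial_product[of k "k + d" n] assms(3,4) by simp
  also have "(\<Sum>i = Suc k..k + d. ?f i)
      = (\<Sum>t<d. (-1) ^ (d - 1 - t) * real ((n - (k + 1 + t)) choose (d - 1 - t)) * purity_sum q n \<psi> (k + 1 + t))"
    by (rule sum.reindex_bij_witness[where i = "\<lambda>t. Suc k + t" and j = "\<lambda>i. i - Suc k"])
      (auto simp: Suc_diff_le ac_simps)
  finally show ?thesis .
qed

lemma k_uniform_ineq2:
  assumes "k_uniform q n k \<psi>" "q > 0" "k + 2 \<le> n"
  shows "0 \<le> real (n choose (k + 2)) * (real k + 1)
             - (real n - real k - 1) * purity_sum q n \<psi> (k + 1) + purity_sum q n \<psi> (k + 2)"
proof -
  have sum2: "(\<Sum>t<2. f t) = f 0 + f 1" for f :: "nat \<Rightarrow> real" by (simp add: eval_nat_numeral)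
  have "0 \<le> weight_enumerator q n \<psi> (k + 2)" using assms(3) by (intro weight_enumerator_nonneg) simp
  then show ?thesis
    unfolding weight_enumerator_uniform[OF assms(1,2) zero_less_numeral assms(3)] sum2
    using assms(3) by (simp add: of_nat_diff field_simps)
qed

lemma k_uniform_ineq3:
  assumes "k_uniform q n k \<psi>" "q > 0" "k + 3 \<le> n"
  shows "0 \<le> - real (n choose (k + 3)) * ((real k + 2) * (real k + 1) / 2)
             + (real n - real k - 1) * (real n - real k - 2) / 2 * purity_sum q n \<psi> (k + 1)
             - (real n - real k - 2) * purity_sum q n \<psi> (k + 2) + purity_sum q n \<psi> (k + 3)"
proof -
  have sum3: "(\<Sum>t<3. f t) = f 0 + f 1 + f 2" for f :: "nat \<Rightarrow> real" by (simp add: eval_nat_numeral)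
  have "(k + 2) choose k = (k + 2) choose 2" using binomial_symmetric[of k "k + 2"] by simp
  moreover have "0 \<le> weight_enumerator q n \<psi> (k + 3)" using assms(3) by (intro weight_enumerator_nonneg) simp
  ultimately show ?thesis
    unfolding weight_enumerator_uniform[OF assms(1,2) zero_less_numeral assms(3)] sum3
    using assms(3)
    by (simp add: eval_nat_numeral of_nat_diff real_choose_two[unfolded numeral_2_eq_2] field_simps)
qed

lemma k_uniform_ineq4:
  assumes "k_uniform q n k \<psi>" "q > 0" "k + 4 \<le> n"
  shows "0 \<le> real (n choose (k + 4)) * ((real k + 3) * (real k + 2) * (real k + 1) / 6)
             - (real n - real k - 1) * (real n - real k - 2) * (real n - real k - 3) / 6 * purity_sum q n \<psi> (k + 1)
             + (real n - real k - 2) * (real n - real k - 3) / 2 * purity_sum q n \<psi> (k + 2)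
             - (real n - real k - 3) * purity_sum q n \<psi> (k + 3) + purity_sum q n \<psi> (k + 4)"
proof -
  have sum4: "(\<Sum>t<4. f t) = f 0 + f 1 + f 2 + f 3" for f :: "nat \<Rightarrow> real" by (simp add: eval_nat_numeral)
  have "(k + 3) choose k = (k + 3) choose 3" using binomial_symmetric[of k "k + 3"] by simp
  moreover have "0 \<le> weight_enumerator q n \<psi> (k + 4)" using assms(3) by (intro weight_enumerator_nonneg) simp
  ultimately show ?thesis
    unfolding weight_enumerator_uniform[OF assms(1,2) zero_less_numeral assms(3)] sum4
    using assms(3)
    by (simp add: eval_nat_numeral of_nat_diff real_choose_two[unfolded numeral_2_eq_2]
        real_choose_three[unfolded numeral_3_eq_3] field_simps)
qed

lemma purity_sum_uniform_mirror:
  assumes "k_uniform q n k \<psi>" "q > 0" "k \<le> n" "i \<le> k" "i + j = n" "j = i + m"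
  shows "purity_sum q n \<psi> j = real q ^ m * real (n choose j)"
proof -
  have "n - i = j" using assms(5) by simp
  then have "n choose j = n choose i" using binomial_symmetric[of i n] assms(5) by simp
  then show ?thesis
    using purity_sum_complement[OF assms(5,6,2)] purity_sum_uniform[OF assms(1,4,3,2)] by simp
qed

section \<open>Infeasibility of the shadow inequalities\<close>

text \<open>In each of the four cases below a nonnegative combination of the inequalities
  \<open>A\<^sub>k\<^sub>+\<^sub>2, A\<^sub>k\<^sub>+\<^sub>3 (, A\<^sub>k\<^sub>+\<^sub>4) \<ge> 0\<close> cancels the unknown purity sums; the multipliers are
  read off from that requirement, and what is left is negative for large \<open>k\<close>.\<close>
lemma even_defect1_infeasible:
  fixes N K R c1 c2 w1 w2 w3 :: real
  assumes A2: "0 \<le> c1 * (K + 1) - (N - K - 1) * w1 + w2"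
    and A3: "0 \<le> - c2 * ((K + 2) * (K + 1) / 2) + (N - K - 1) * (N - K - 2) / 2 * w1
               - (N - K - 2) * w2 + w3"
    and N: "N = 2 * K + 2" and w2: "w2 = R\<^sup>2 * c1" and w3: "w3 = R ^ 4 * c2"
    and ratio: "c2 * (K + 3) = c1 * (N - K - 2)"
    and "0 < c1" "0 < K" "2 \<le> R" "2 * R\<^sup>2 < K + 1"
  shows False
proof -
  define Q where "Q = R\<^sup>2"
  have "4 \<le> Q" unfolding Q_def using power_mono[OF \<open>2 \<le> R\<close>, of 2] by simp
  have E1: "0 \<le> c1 * (K + 1) - (K + 1) * w1 + Q * c1"
    using A2 unfolding N w2 Q_def by (simp add: algebra_simps)
  have E2: "0 \<le> - c2 * ((K + 2) * (K + 1) / 2) + (K + 1) * K / 2 * w1 - K * (Q * c1) + Q\<^sup>2 * c2"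
    using A3 unfolding N w2 w3 Q_def by (simp add: field_simps flip: power_mult)
  have "0 \<le> (K + 3) * (K / 2 * (c1 * (K + 1) - (K + 1) * w1 + Q * c1)
      + (- c2 * ((K + 2) * (K + 1) / 2) + (K + 1) * K / 2 * w1 - K * (Q * c1) + Q\<^sup>2 * c2))"
    using E1 E2 \<open>0 < K\<close> by simp
  also have "\<dots> = K * c1 * (Q - 1) * (2 * Q - K - 1) / 2
      + (c2 * (K + 3) - c1 * K) * (Q\<^sup>2 - (K + 2) * (K + 1) / 2)"
    by (simp add: field_simps power2_eq_square)
  also have "\<dots> < 0"
    using ratio \<open>0 < c1\<close> \<open>0 < K\<close> \<open>4 \<le> Q\<close> \<open>2 * R\<^sup>2 < K + 1\<close>
    unfolding N Q_def by (simp add: mult_pos_neg)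
  finally show False by simp
qed

lemma odd_defect1_infeasible:
  fixes N K R c1 c2 w1 w2 w3 :: real
  assumes A2: "0 \<le> c1 * (K + 1) - (N - K - 1) * w1 + w2"
    and A3: "0 \<le> - c2 * ((K + 2) * (K + 1) / 2) + (N - K - 1) * (N - K - 2) / 2 * w1
               - (N - K - 2) * w2 + w3"
    and N: "N = 2 * K + 3" and w2: "w2 = R * w1" and w3: "w3 = R ^ 3 * c2"
    and ratio: "c2 * (K + 3) = c1 * (N - K - 2)"
    and "0 < c1" "2 \<le> R" "2 * R\<^sup>2 + 2 * R < K + 1"
  shows False
proof -
  define M where "M = K + 1"
  have M: "2 * R\<^sup>2 + 2 * R < M" and "2 * R < M"
    using \<open>2 * R\<^sup>2 + 2 * R < K + 1\<close> zero_le_power2[of R] \<open>2 \<le> R\<close> unfolding M_def by linarith+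
  have E1: "0 \<le> c1 * M - (M + 1) * w1 + R * w1"
    using A2 unfolding N w2 M_def by (simp add: algebra_simps)
  have E2: "0 \<le> - c2 * ((M + 1) * M / 2) + (M + 1) * M / 2 * w1 - M * (R * w1) + R ^ 3 * c2"
    using A3 unfolding N w2 w3 M_def by (simp add: field_simps)
  define u where "u = M + 1 - R"
  define v where "v = M * ((M + 1) / 2 - R)"
  have "0 < u" unfolding u_def using \<open>2 * R < M\<close> \<open>2 \<le> R\<close> by simp
  have "0 < v"
    unfolding v_def using \<open>2 * R < M\<close> \<open>2 \<le> R\<close> by (intro mult_pos_pos) (simp_all add: field_simps)
  have "0 \<le> (M + 2) * (v * (c1 * M - (M + 1) * w1 + R * w1)
      + u * (- c2 * ((M + 1) * M / 2) + (M + 1) * M / 2 * w1 - M * (R * w1) + R ^ 3 * c2))"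
    by (rule mult_nonneg_nonneg[OF _ add_nonneg_nonneg[OF mult_nonneg_nonneg[OF _ E1] mult_nonneg_nonneg[OF _ E2]]])
      (use \<open>0 < u\<close> \<open>0 < v\<close> \<open>2 * R < M\<close> \<open>2 \<le> R\<close> in simp_all)
  also have "\<dots> = - (M * c1 * (R - 1) * (M * (M - (2 * R\<^sup>2 + 2 * R - 1)) + 2 * R ^ 3)) / 2
      + (c2 * (M + 2) - c1 * M) * u * (R ^ 3 - (M + 1) * M / 2)"
    unfolding u_def v_def by (simp add: field_simps power2_eq_square power3_eq_cube)
  also have "\<dots> < 0"
  proof -
    have "0 < M * c1 * (R - 1) * (M * (M - (2 * R\<^sup>2 + 2 * R - 1)) + 2 * R ^ 3)"
      using M \<open>2 * R < M\<close> \<open>0 < c1\<close> \<open>2 \<le> R\<close> by (intro mult_pos_pos add_pos_pos) simp_all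
    moreover have "c2 * (M + 2) = c1 * M" using ratio unfolding N M_def by (simp add: algebra_simps)
    ultimately show ?thesis by simp
  qed
  finally show False by simp
qed

lemma cubic_neg_of_large:
  fixes M Q :: real
  assumes Q: "4 \<le> Q" and M: "3 * Q + 2 \<le> M"
  shows "- (M ^ 3) + 3 * Q * M\<^sup>2 + (3 * Q + 1) * M - 6 * Q * (Q + 1) < 0"
proof -
  have "M\<^sup>2 * 2 \<le> M\<^sup>2 * (M - 3 * Q)" using M by (intro mult_left_mono) auto
  moreover have "(3 * Q + 1) * M \<le> M * M" using M Q by (intro mult_right_mono) auto
  moreover have "0 < 6 * Q * (Q + 1)" using Q by simp
  moreover have "- (M ^ 3) + 3 * Q * M\<^sup>2 = - (M\<^sup>2 * (M - 3 * Q))"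
    by (simp add: algebra_simps power2_eq_square power3_eq_cube)
  ultimately show ?thesis using zero_le_square[of M] unfolding power2_eq_square by linarith
qed

lemma quartic_neg_of_large:
  fixes M R :: real
  assumes R: "2 \<le> R" and M: "3 * R\<^sup>2 + 3 * R + 2 \<le> M"
  shows "- (M ^ 4) + (3 * R\<^sup>2 + 3 * R - 2) * M ^ 3 + (- 6 * R ^ 3 + 3 * R\<^sup>2 + 3 * R + 1) * M\<^sup>2
     + (- 6 * R ^ 3 - 6 * R\<^sup>2 - 6 * R + 2) * M + 12 * R ^ 3 < 0"
proof -
  define D where "D = M - 3 * R\<^sup>2 - 3 * R + 2"
  have "0 \<le> R ^ 3" using R by simp
  have "4 \<le> D" unfolding D_def using M by simp
  have "2 \<le> M" using M R zero_le_power2[of R] by linarith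
  then have "0 < M ^ 3" by simp
  have "M ^ 3 * 4 \<le> M ^ 3 * D" using \<open>4 \<le> D\<close> \<open>0 < M ^ 3\<close> by (intro mult_left_mono) auto
  moreover have "M\<^sup>2 * (3 * R\<^sup>2 + 3 * R + 1) \<le> M\<^sup>2 * M" using M by (intro mult_left_mono) auto
  moreover have "0 \<le> M * (6 * R ^ 3 + 6 * R\<^sup>2 + 6 * R - 2)"
    using \<open>2 \<le> M\<close> \<open>0 \<le> R ^ 3\<close> R zero_le_power2[of R] by (intro mult_nonneg_nonneg) linarith+
  moreover have "R ^ 3 * 2 \<le> R ^ 3 * M\<^sup>2"
    using power_mono[OF \<open>2 \<le> M\<close>, of 2] \<open>0 \<le> R ^ 3\<close> by (intro mult_left_mono) auto
  moreover have "- (M ^ 4) + (3 * R\<^sup>2 + 3 * R - 2) * M ^ 3 + (- 6 * R ^ 3 + 3 * R\<^sup>2 + 3 * R + 1) * M\<^sup>2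
      + (- 6 * R ^ 3 - 6 * R\<^sup>2 - 6 * R + 2) * M + 12 * R ^ 3
      = - (M ^ 3 * D) + M\<^sup>2 * (3 * R\<^sup>2 + 3 * R + 1) - 6 * (R ^ 3 * M\<^sup>2)
        - M * (6 * R ^ 3 + 6 * R\<^sup>2 + 6 * R - 2) + 6 * (R ^ 3 * 2)"
    unfolding D_def by (simp add: algebra_simps power2_eq_square power3_eq_cube power4_eq_xxxx)
  moreover have "M\<^sup>2 * M = M ^ 3" by (simp add: power2_eq_square power3_eq_cube)
  ultimately show ?thesis using \<open>0 < M ^ 3\<close> by linarith
qed

lemma even_defect2_infeasible:
  fixes N K R c0 c1 c2 w1 w2 w3 w4 :: real
  assumes A2: "0 \<le> c0 * (K + 1) - (N - K - 1) * w1 + w2"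
    and A3: "0 \<le> - c1 * ((K + 2) * (K + 1) / 2) + (N - K - 1) * (N - K - 2) / 2 * w1
               - (N - K - 2) * w2 + w3"
    and A4: "0 \<le> c2 * ((K + 3) * (K + 2) * (K + 1) / 6)
               - (N - K - 1) * (N - K - 2) * (N - K - 3) / 6 * w1
               + (N - K - 2) * (N - K - 3) / 2 * w2 - (N - K - 3) * w3 + w4"
    and N: "N = 2 * K + 4" and w3: "w3 = R\<^sup>2 * w1" and w4: "w4 = R ^ 4 * c2"
    and ratio1: "c1 * (K + 3) = c0 * (N - K - 2)" and ratio2: "c2 * (K + 4) = c1 * (N - K - 3)"
    and "0 < c0" "2 \<le> R" "3 * R\<^sup>2 \<le> K"
  shows False
proof -
  define Q where "Q = R\<^sup>2"
  define M where "M = K + 2"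
  have Q: "4 \<le> Q" unfolding Q_def using power_mono[OF \<open>2 \<le> R\<close>, of 2] by simp
  have M: "3 * Q + 2 \<le> M" unfolding M_def Q_def using \<open>3 * R\<^sup>2 \<le> K\<close> by simp
  have E1: "0 \<le> c0 * (M - 1) - (M + 1) * w1 + w2"
    using A2 unfolding N M_def by (simp add: algebra_simps)
  have E2: "0 \<le> - c1 * (M * (M - 1) / 2) + (M + 1) * M / 2 * w1 - M * w2 + Q * w1"
    using A3 unfolding N w3 M_def Q_def by (simp add: field_simps)
  have E3: "0 \<le> c2 * ((M + 1) * M * (M - 1) / 6) - (M + 1) * M * (M - 1) / 6 * w1
      + M * (M - 1) / 2 * w2 - (M - 1) * (Q * w1) + Q\<^sup>2 * c2"
    using A4 unfolding N w3 w4 M_def Q_def by (simp add: field_simps flip: power_mult)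
  have "M * 2 \<le> M * (M + 1)" using M Q by (intro mult_left_mono) auto
  then have MQ: "6 * Q < M * (M + 1)" using M by linarith
  define l1 where "l1 = M * (M - 1) * (M * (M + 1) - 6 * Q) / 12"
  define l2 where "l2 = (M - 1) * (M * (M + 1) - 3 * Q) / 3"
  define l3 where "l3 = M * (M + 1) / 2 - Q"
  define A where "A = l3 * ((M + 1) * M * (M - 1) / 6 + Q\<^sup>2)"
  define P where "P = - (M ^ 3) + 3 * Q * M\<^sup>2 + (3 * Q + 1) * M - 6 * Q * (Q + 1)"
  have "0 \<le> l1" "0 \<le> l2" "0 \<le> l3" unfolding l1_def l2_def l3_def using M Q MQ by simp_all
  have "0 \<le> (M + 1) * (M + 2) * (l1 * (c0 * (M - 1) - (M + 1) * w1 + w2)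
      + l2 * (- c1 * (M * (M - 1) / 2) + (M + 1) * M / 2 * w1 - M * w2 + Q * w1)
      + l3 * (c2 * ((M + 1) * M * (M - 1) / 6) - (M + 1) * M * (M - 1) / 6 * w1
              + M * (M - 1) / 2 * w2 - (M - 1) * (Q * w1) + Q\<^sup>2 * c2))"
    by (rule mult_nonneg_nonneg[OF _ add_nonneg_nonneg[OF add_nonneg_nonneg[OF
          mult_nonneg_nonneg[OF _ E1] mult_nonneg_nonneg[OF _ E2]] mult_nonneg_nonneg[OF _ E3]]])
      (use \<open>0 \<le> l1\<close> \<open>0 \<le> l2\<close> \<open>0 \<le> l3\<close> M Q in simp_all)
  also have "\<dots> = c0 * M * (M - 1) * (Q - 1) * P / 6
      + (c1 * (M + 1) - c0 * M) * ((M + 2) * (- l2 * M * (M - 1) / 2) + (M - 1) * A)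
      + (c2 * (M + 2) - c1 * (M - 1)) * (M + 1) * A"
    unfolding l1_def l2_def l3_def A_def P_def by (simp add: field_simps power2_eq_square power3_eq_cube)
  also have "\<dots> = c0 * M * (M - 1) * (Q - 1) * P / 6"
    using ratio1 ratio2 unfolding N M_def by (simp add: algebra_simps)
  also have "\<dots> < 0"
  proof -
    have "P < 0" unfolding P_def using Q M by (rule cubic_neg_of_large)
    moreover have "0 < c0 * M * (M - 1) * (Q - 1)" using \<open>0 < c0\<close> M Q by simp
    ultimately show ?thesis by (simp add: mult_pos_neg)
  qed
  finally show False by simp
qed

lemma odd_defect2_infeasible:
  fixes N K R c0 c1 c2 w1 w2 w3 w4 :: real
  assumes A2: "0 \<le> c0 * (K + 1) - (N - K - 1) * w1 + w2"
    and A3: "0 \<le> - c1 * ((K + 2) * (K + 1) / 2) + (N - K - 1) * (N - K - 2) / 2 * w1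
               - (N - K - 2) * w2 + w3"
    and A4: "0 \<le> c2 * ((K + 3) * (K + 2) * (K + 1) / 6)
               - (N - K - 1) * (N - K - 2) * (N - K - 3) / 6 * w1
               + (N - K - 2) * (N - K - 3) / 2 * w2 - (N - K - 3) * w3 + w4"
    and N: "N = 2 * K + 5" and w3: "w3 = R * w2" and w4: "w4 = R ^ 3 * w1"
    and ratio1: "c1 * (K + 3) = c0 * (N - K - 2)" and ratio2: "c2 * (K + 4) = c1 * (N - K - 3)"
    and "0 < c0" "0 \<le> K" "2 \<le> R" "3 * R\<^sup>2 + 3 * R \<le> K"
  shows False
proof -
  define M where "M = K + 2"
  have "(c1 - c0) * (K + 3) = 0" using ratio1 unfolding N by (simp add: algebra_simps)
  then have c1: "c1 = c0" using \<open>0 \<le> K\<close> by simp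
  have R: "2 * R \<le> R\<^sup>2" "0 \<le> R ^ 3" using \<open>2 \<le> R\<close> by (simp_all add: power2_eq_square)
  have M: "3 * R\<^sup>2 + 3 * R + 2 \<le> M" unfolding M_def using \<open>3 * R\<^sup>2 + 3 * R \<le> K\<close> by simp
  have E1: "0 \<le> c0 * (M - 1) - (M + 2) * w1 + w2"
    using A2 unfolding N M_def by (simp add: algebra_simps)
  have E2: "0 \<le> - c0 * (M * (M - 1) / 2) + (M + 2) * (M + 1) / 2 * w1 - (M + 1) * w2 + R * w2"
    using A3 unfolding N w3 M_def c1 by (simp add: field_simps)
  have E3: "0 \<le> c2 * ((M + 1) * M * (M - 1) / 6) - (M + 2) * (M + 1) * M / 6 * w1
      + (M + 1) * M / 2 * w2 - M * (R * w2) + R ^ 3 * w1"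
    using A4 unfolding N w3 w4 M_def by (simp add: field_simps)
  have MR: "0 \<le> M" "0 \<le> M + 1 - 4 * R" "0 \<le> M + 1 - 2 * R" "0 \<le> M + 1 - R" "3 * R \<le> M + 1"
    using M R \<open>2 \<le> R\<close> by linarith+
  then have "0 \<le> (M + 1) / 3 - R" by (simp add: field_simps)
  define l1 where "l1 = (M + 2) * (M + 1) * M * (M + 1 - 4 * R) / 12 + R ^ 3 * (M + 1 - R)"
  define l2 where "l2 = M * (M + 2) * ((M + 1) / 3 - R) + R ^ 3"
  define l3 where "l3 = (M + 2) * (M + 1 - 2 * R) / 2"
  define P where "P = - (M ^ 4) + (3 * R\<^sup>2 + 3 * R - 2) * M ^ 3 + (- 6 * R ^ 3 + 3 * R\<^sup>2 + 3 * R + 1) * M\<^sup>2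
     + (- 6 * R ^ 3 - 6 * R\<^sup>2 - 6 * R + 2) * M + 12 * R ^ 3"
  have l: "0 \<le> l1" "0 \<le> l2" "0 \<le> l3"
    unfolding l1_def l2_def l3_def using MR \<open>0 \<le> (M + 1) / 3 - R\<close> R
    by (intro add_nonneg_nonneg mult_nonneg_nonneg divide_nonneg_pos; simp)+
  have "0 \<le> (M + 2) * (l1 * (c0 * (M - 1) - (M + 2) * w1 + w2)
      + l2 * (- c0 * (M * (M - 1) / 2) + (M + 2) * (M + 1) / 2 * w1 - (M + 1) * w2 + R * w2)
      + l3 * (c2 * ((M + 1) * M * (M - 1) / 6) - (M + 2) * (M + 1) * M / 6 * w1
              + (M + 1) * M / 2 * w2 - M * (R * w2) + R ^ 3 * w1))"
    by (rule mult_nonneg_nonneg[OF _ add_nonneg_nonneg[OF add_nonneg_nonneg[OF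
          mult_nonneg_nonneg[OF _ E1] mult_nonneg_nonneg[OF _ E2]] mult_nonneg_nonneg[OF _ E3]]])
      (use l M R in simp_all)
  also have "\<dots> = c0 * (R - 1) * P / 6 + (c2 * (M + 2) - c0 * M) * (l3 * (M + 1) * M * (M - 1) / 6)"
    unfolding l1_def l2_def l3_def P_def
    by (simp add: field_simps power2_eq_square power3_eq_cube power4_eq_xxxx)
  also have "\<dots> = c0 * (R - 1) * P / 6"
    using ratio2 unfolding N M_def c1 by (simp add: algebra_simps)
  also have "\<dots> < 0"
  proof -
    have "P < 0" unfolding P_def using \<open>2 \<le> R\<close> M by (rule quartic_neg_of_large)
    moreover have "0 < c0 * (R - 1)" using \<open>0 < c0\<close> \<open>2 \<le> R\<close> by simp
    ultimately show ?thesis by (simp add: mult_pos_neg)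
  qed
  finally show False by simp
qed

lemma no_k_uniform_state_even_defect1:
  assumes ku: "k_uniform q n k \<psi>" and "2 \<le> q" and n: "n = 2 * k + 2" and "4 * q\<^sup>2 < n"
  shows False
proof -
  have q: "0 < q" using \<open>2 \<le> q\<close> by simp
  have "4 \<le> q\<^sup>2" using power_mono[OF \<open>2 \<le> q\<close>, of 2] by simp
  then have "1 \<le> k" using \<open>4 * q\<^sup>2 < n\<close> n by simp
  have "real (4 * q\<^sup>2) < real n" using \<open>4 * q\<^sup>2 < n\<close> by (simp only: of_nat_less_iff)
  then have bound: "2 * (real q)\<^sup>2 < real k + 1" using n by simp
  have w2: "purity_sum q n \<psi> (k + 2) = (real q)\<^sup>2 * real (n choose (k + 2))"
    by (rule purity_sum_uniform_mirror[OF ku q, where i = k]) (use n in simp_all)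
  have w3: "purity_sum q n \<psi> (k + 3) = real q ^ 4 * real (n choose (k + 3))"
    by (rule purity_sum_uniform_mirror[OF ku q, where i = "k - 1"]) (use n \<open>1 \<le> k\<close> in simp_all)
  have "k + 2 \<le> n" using n by simp
  then have "0 < real (n choose (k + 2))" by simp
  show False
    by (rule even_defect1_infeasible[OF k_uniform_ineq2[OF ku q] k_uniform_ineq3[OF ku q] _ w2 w3
          real_binomial_ratio_plus3])
      (use n \<open>1 \<le> k\<close> \<open>2 \<le> q\<close> \<open>0 < real (n choose (k + 2))\<close> bound in simp_all)
qed

lemma no_k_uniform_state_odd_defect1:
  assumes ku: "k_uniform q n k \<psi>" and "2 \<le> q" and n: "n = 2 * k + 3" and "4 * q\<^sup>2 + 4 * q + 1 < n"
  shows False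
proof -
  have q: "0 < q" using \<open>2 \<le> q\<close> by simp
  have "real (4 * q\<^sup>2 + 4 * q + 1) < real n" using \<open>4 * q\<^sup>2 + 4 * q + 1 < n\<close> by (simp only: of_nat_less_iff)
  then have bound: "2 * (real q)\<^sup>2 + 2 * real q < real k + 1" using n by simp
  have w2: "purity_sum q n \<psi> (k + 2) = real q * purity_sum q n \<psi> (k + 1)"
    using purity_sum_complement[where i = "k + 1" and j = "k + 2" and m = 1] n q by simp
  have w3: "purity_sum q n \<psi> (k + 3) = real q ^ 3 * real (n choose (k + 3))"
    by (rule purity_sum_uniform_mirror[OF ku q, where i = k]) (use n in simp_all)
  show False
    by (rule odd_defect1_infeasible[OF k_uniform_ineq2[OF ku q] k_uniform_ineq3[OF ku q] _ w2 w3
          real_binomial_ratio_plus3])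
      (use n \<open>2 \<le> q\<close> bound in simp_all)
qed

lemma no_k_uniform_state_even_defect2:
  assumes ku: "k_uniform q n k \<psi>" and "2 \<le> q" and n: "n = 2 * k + 4" and "6 * q\<^sup>2 + 2 < n"
  shows False
proof -
  have q: "0 < q" using \<open>2 \<le> q\<close> by simp
  have "3 * q\<^sup>2 \<le> k" using \<open>6 * q\<^sup>2 + 2 < n\<close> n by linarith
  then have "real (3 * q\<^sup>2) \<le> real k" by (simp only: of_nat_le_iff)
  then have bound: "3 * (real q)\<^sup>2 \<le> real k" by simp
  have w3: "purity_sum q n \<psi> (k + 3) = (real q)\<^sup>2 * purity_sum q n \<psi> (k + 1)"
    by (rule purity_sum_complement) (use n q in simp_all)
  have w4: "purity_sum q n \<psi> (k + 4) = real q ^ 4 * real (n choose (k + 4))"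
    by (rule purity_sum_uniform_mirror[OF ku q, where i = k]) (use n in simp_all)
  show False
    by (rule even_defect2_infeasible[OF k_uniform_ineq2[OF ku q] k_uniform_ineq3[OF ku q]
          k_uniform_ineq4[OF ku q] _ w3 w4 real_binomial_ratio_plus3 real_binomial_ratio_plus4])
      (use n \<open>2 \<le> q\<close> bound in simp_all)
qed

lemma no_k_uniform_state_odd_defect2:
  assumes ku: "k_uniform q n k \<psi>" and "2 \<le> q" and n: "n = 2 * k + 5" and "6 * q\<^sup>2 + 6 * q + 3 < n"
  shows False
proof -
  have q: "0 < q" using \<open>2 \<le> q\<close> by simp
  have "3 * q\<^sup>2 + 3 * q \<le> k" using \<open>6 * q\<^sup>2 + 6 * q + 3 < n\<close> n by linarith
  then have "real (3 * q\<^sup>2 + 3 * q) \<le> real k" by (simp only: of_nat_le_iff)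
  then have bound: "3 * (real q)\<^sup>2 + 3 * real q \<le> real k" by simp
  have w3: "purity_sum q n \<psi> (k + 3) = real q * purity_sum q n \<psi> (k + 2)"
    using purity_sum_complement[where i = "k + 2" and j = "k + 3" and m = 1] n q by simp
  have w4: "purity_sum q n \<psi> (k + 4) = real q ^ 3 * purity_sum q n \<psi> (k + 1)"
    by (rule purity_sum_complement) (use n q in simp_all)
  show False
    by (rule odd_defect2_infeasible[OF k_uniform_ineq2[OF ku q] k_uniform_ineq3[OF ku q]
          k_uniform_ineq4[OF ku q] _ w3 w4 real_binomial_ratio_plus3 real_binomial_ratio_plus4])
      (use n \<open>2 \<le> q\<close> bound in simp_all)
qed

theorem theorem4:
  fixes q n :: nat
  assumes "q \<ge> 2" and "n > 0"
  shows "((even n \<and> n > 4 * q\<^sup>2) \<or> (odd n \<and> n > 4 * q\<^sup>2 + 4 * q + 1)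
            \<longrightarrow> \<not> (\<exists>\<psi>. AME_defect q n 1 \<psi>))
       \<and> ((even n \<and> n > 6 * q\<^sup>2 + 2) \<or> (odd n \<and> n > 6 * q\<^sup>2 + 6 * q + 3)
            \<longrightarrow> \<not> (\<exists>\<psi>. AME_defect q n 2 \<psi>))"
proof -
  have "4 \<le> q\<^sup>2" using power_mono[OF \<open>q \<ge> 2\<close>, of 2] by simp
  have n_split: "n = 2 * (n div 2 - l) + 2 * l + (if even n then 0 else 1)" if "2 * l \<le> n" for l
    using that by presburger
  have defect1: False if "AME_defect q n 1 \<psi>" "(even n \<and> n > 4 * q\<^sup>2) \<or> (odd n \<and> n > 4 * q\<^sup>2 + 4 * q + 1)" for \<psi>
  proof -
    have ku: "k_uniform q n (n div 2 - 1) \<psi>" using that(1) unfolding AME_defect_def .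
    show False
      using that(2) no_k_uniform_state_even_defect1[OF ku \<open>q \<ge> 2\<close>]
        no_k_uniform_state_odd_defect1[OF ku \<open>q \<ge> 2\<close>] n_split[of 1] \<open>4 \<le> q\<^sup>2\<close> by auto
  qed
  have defect2: False if "AME_defect q n 2 \<psi>" "(even n \<and> n > 6 * q\<^sup>2 + 2) \<or> (odd n \<and> n > 6 * q\<^sup>2 + 6 * q + 3)" for \<psi>
  proof -
    have ku: "k_uniform q n (n div 2 - 2) \<psi>" using that(1) unfolding AME_defect_def .
    show False
      using that(2) no_k_uniform_state_even_defect2[OF ku \<open>q \<ge> 2\<close>]
        no_k_uniform_state_odd_defect2[OF ku \<open>q \<ge> 2\<close>] n_split[of 2] \<open>4 \<le> q\<^sup>2\<close> by auto
  qed
  show ?thesis using defect1 defect2 by blast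
qed

end
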